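(* Let $(T_0,\widetilde T_0)$ be a joint pair of closed abstract Friedrichs operators on a complex Hilbert space $\mathcal{H}$, with $T_1:=\widetilde T_0^*$, $\widetilde T_1:=T_0^*$, $\mathcal{W}_0:=\operatorname{dom}T_0=\operatorname{dom}\widetilde T_0$ and $\mathcal{W}:=\operatorname{dom}T_1=\operatorname{dom}\widetilde T_1$, the latter equipped with the graph norm $\|u\|_{T_1}=(\|u\|^2+\|T_1u\|^2)^{1/2}$. Then the sum $\mathcal{W}_0+\operatorname{ker}T_1+\operatorname{ker}\widetilde T_1$ is direct and is a closed subspace of $\mathcal{W}$. In particular, $\mathcal{W}_0\dotplus\operatorname{ker}T_1$ and $\mathcal{W}_0\dotplus\operatorname{ker}\widetilde T_1$ are both closed in $\mathcal{W}$.
   Context: $\mathcal{H}$ is a complex Hilbert space with inner product $\langle\cdot,\cdot\rangle$ and norm $\|\cdot\|$. A pair $(T,\widetilde T)$ of densely defined linear operators on $\mathcal{H}$ is a joint pair of abstract Friedrichs operators if: (T1) $T$ and $\widetilde T$ have a common dense domain $\mathcal{D}$ and $\langle T\varphi,\psi\rangle=\langle\varphi,\widetilde T\psi\rangle$ for all $\varphi,\psi\in\mathcal{D}$; (T2) there is $c>0$ with $\|(T+\widetilde T)\varphi\|\le c\|\varphi\|$ for all $\varphi\in\mathcal{D}$; (T3) there is $\mu_0>0$ with $\langle (T+\widetilde T)\varphi,\varphi\rangle\ge 2\mu_0\|\varphi\|^2$ for all $\varphi\in\mathcal{D}$. A joint pair of closed abstract Friedrichs operators is such a pair $(T_0,\widetilde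 T_0)$ in which both operators are closed. One has $T_0\subseteq T_1$, $\widetilde T_0\subseteq\widetilde T_1$ and $\operatorname{dom}T_1=\operatorname{dom}\widetilde T_1$; the graph norms of $T_1$ and $\widetilde T_1$ on $\mathcal{W}$ are equivalent. *)

theory Defs
  imports "HOL-Analysis.Analysis"
begin

class complex_hilbert = real_normed_vector + complete_space +
  fixes scaleC :: "complex \<Rightarrow> 'a \<Rightarrow> 'a" (infixr "*\<^sub>C" 75)
    and cinner :: "'a \<Rightarrow> 'a \<Rightarrow> complex"
  assumes scaleC_add_right: "a *\<^sub>C (x + y) = a *\<^sub>C x + a *\<^sub>C y"
    and scaleC_add_left: "(a + b) *\<^sub>C x = a *\<^sub>C x + b *\<^sub>C x"
    and scaleC_scaleC: "a *\<^sub>C (b *\<^sub>C x) = (a * b) *\<^sub>C x"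
    and scaleC_one: "1 *\<^sub>C x = x"
    and scaleR_scaleC: "scaleR r x = complex_of_real r *\<^sub>C x"
    and cinner_add_left: "cinner (x + y) z = cinner x z + cinner y z"
    and cinner_scaleC_left: "cinner (a *\<^sub>C x) y = a * cinner x y"
    and cinner_commute: "cinner y x = cnj (cinner x y)"
    and cinner_ge_zero: "0 \<le> Re (cinner x x)"
    and norm_eq_sqrt_cinner: "norm x = sqrt (Re (cinner x x))"

instantiation complex :: complex_hilbert
begin
definition scaleC_complex :: "complex \<Rightarrow> complex \<Rightarrow> complex" where
  "scaleC_complex a x = a * x"
definition cinner_complex :: "complex \<Rightarrow> complex \<Rightarrow> complex" where
  "cinner_complex x y = x * cnj y"
instance
  by standard (auto simp: scaleC_complex_def cinner_complex_def algebra_simps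
      scaleR_conv_of_real complex_norm_square[symmetric])
end

definition csubspace :: "'a::complex_hilbert set \<Rightarrow> bool" where
  "csubspace S \<longleftrightarrow> 0 \<in> S \<and> (\<forall>x\<in>S. \<forall>y\<in>S. x + y \<in> S) \<and> (\<forall>c. \<forall>x\<in>S. c *\<^sub>C x \<in> S)"

text \<open>A densely defined linear operator with domain D acting by f (values of f outside D
are irrelevant).\<close>
definition dd_lin_op :: "'a::complex_hilbert set \<Rightarrow> ('a \<Rightarrow> 'a) \<Rightarrow> bool" where
  "dd_lin_op D f \<longleftrightarrow> csubspace D \<and> closure D = UNIV \<and>
     (\<forall>x\<in>D. \<forall>y\<in>D. f (x + y) = f x + f y) \<and> (\<forall>c. \<forall>x\<in>D. f (c *\<^sub>C x) = c *\<^sub>C f x)"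

definition closed_op :: "'a::complex_hilbert set \<Rightarrow> ('a \<Rightarrow> 'a) \<Rightarrow> bool" where
  "closed_op D f \<longleftrightarrow> closed {(x, f x) | x. x \<in> D}"

definition is_adjoint :: "'a::complex_hilbert set \<Rightarrow> ('a \<Rightarrow> 'a) \<Rightarrow> 'a set \<Rightarrow> ('a \<Rightarrow> 'a) \<Rightarrow> bool" where
  "is_adjoint D f D' g \<longleftrightarrow>
     D' = {y. \<exists>z. \<forall>x\<in>D. cinner (f x) y = cinner x z} \<and>
     (\<forall>y\<in>D'. \<forall>x\<in>D. cinner (f x) y = cinner x (g y))"

text \<open>Joint pair of abstract Friedrichs operators with common dense domain D, conditions
(T1)-(T3). In (T3) the quantity is real by (T1); we compare its real part.\<close>
definition joint_AFO :: "'a::complex_hilbert set \<Rightarrow> ('a \<Rightarrow> 'a) \<Rightarrow> ('a \<Rightarrow> 'a) \<Rightarrow> bool" where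
  "joint_AFO D T Tt \<longleftrightarrow> dd_lin_op D T \<and> dd_lin_op D Tt \<and>
     (\<forall>\<phi>\<in>D. \<forall>\<psi>\<in>D. cinner (T \<phi>) \<psi> = cinner \<phi> (Tt \<psi>)) \<and>
     (\<exists>c>0. \<forall>\<phi>\<in>D. norm (T \<phi> + Tt \<phi>) \<le> c * norm \<phi>) \<and>
     (\<exists>\<mu>0>0. \<forall>\<phi>\<in>D. Re (cinner (T \<phi> + Tt \<phi>) \<phi>) \<ge> 2 * \<mu>0 * (norm \<phi>)\<^sup>2)"

definition closed_joint_AFO :: "'a::complex_hilbert set \<Rightarrow> ('a \<Rightarrow> 'a) \<Rightarrow> ('a \<Rightarrow> 'a) \<Rightarrow> bool" where
  "closed_joint_AFO D T Tt \<longleftrightarrow> joint_AFO D T Tt \<and> closed_op D T \<and> closed_op D Tt"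

definition op_ker :: "'a::complex_hilbert set \<Rightarrow> ('a \<Rightarrow> 'a) \<Rightarrow> 'a set" where
  "op_ker D f = {u \<in> D. f u = 0}"

definition closed_graph_norm :: "'a::complex_hilbert set \<Rightarrow> ('a \<Rightarrow> 'a) \<Rightarrow> 'a set \<Rightarrow> bool" where
  "closed_graph_norm W T S \<longleftrightarrow>
     (\<forall>u x. (\<forall>n. u n \<in> S) \<longrightarrow> x \<in> W \<longrightarrow>
        (\<lambda>n. sqrt ((norm (u n - x))\<^sup>2 + (norm (T (u n) - T x))\<^sup>2)) \<longlonglongrightarrow> 0 \<longrightarrow> x \<in> S)"

end

theory Submission
  imports Defs
begin

text \<open>By density, \<open>T1 + Tt1\<close> is the bounded extension of \<open>T0 + Tt0\<close> to \<open>W = Wt\<close> and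
  inherits the coercivity \<open>Re \<langle>(T1 + Tt1) v, v\<rangle> \<ge> 2\<mu> \<parallel>v\<parallel>\<^sup>2\<close>. Let \<open>u = w + a + b\<close> with
  \<open>w \<in> W0\<close>, \<open>T1 a = 0\<close>, \<open>Tt1 b = 0\<close>. Then \<open>T1 u = T0 w + T1 b\<close> and
  \<open>\<langle>T0 w, b\<rangle> = \<langle>w, Tt1 b\<rangle> = 0\<close>, so \<open>Re \<langle>T1 u, b\<rangle> = Re \<langle>(T1 + Tt1) b, b\<rangle>\<close> and
  \<open>2\<mu> \<parallel>b\<parallel> \<le> \<parallel>T1 u\<parallel>\<close>; symmetrically \<open>2\<mu> \<parallel>a\<parallel> \<le> \<parallel>Tt1 u\<parallel> \<le> c \<parallel>u\<parallel> + \<parallel>T1 u\<parallel>\<close>.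
  Thus \<open>a\<close> and \<open>b\<close> are bounded by the graph norm of \<open>u\<close>: the sum is direct, and along a
  graph-norm convergent sequence in the sum the kernel components converge in the closed
  kernels, whereupon the \<open>W0\<close>-components converge in the graph norm of the closed
  operator \<open>T0\<close>.\<close>

lemma cinner_add_right: "cinner x (y + z) = cinner x y + cinner (x::'a::complex_hilbert) z"
  by (metis cinner_add_left cinner_commute complex_cnj_add)

lemma cinner_scaleC_right: "cinner x (a *\<^sub>C y) = cnj a * cinner (x::'a::complex_hilbert) y"
  by (metis cinner_scaleC_left cinner_commute complex_cnj_mult)

lemma scaleC_minus_one: "(-1) *\<^sub>C x = - (x::'a::complex_hilbert)"
  using scaleR_scaleC[of "-1" x] by simp

lemma cinner_zero_left [simp]: "cinner 0 (y::'a::complex_hilbert) = 0"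
  using cinner_add_left[of 0 0 y] by simp

lemma cinner_zero_right [simp]: "cinner (y::'a::complex_hilbert) 0 = 0"
  by (metis cinner_commute cinner_zero_left complex_cnj_zero)

lemma cinner_minus_left: "cinner (- x) (y::'a::complex_hilbert) = - cinner x y"
  by (metis cinner_scaleC_left scaleC_minus_one mult_minus1)

lemma cinner_minus_right: "cinner y (- x::'a::complex_hilbert) = - cinner y x"
  by (metis cinner_commute cinner_minus_left complex_cnj_minus)

lemma cinner_diff_left: "cinner (x - z) (y::'a::complex_hilbert) = cinner x y - cinner z y"
  by (metis cinner_add_left cinner_minus_left diff_conv_add_uminus)

lemma cinner_diff_right: "cinner y (x - z::'a::complex_hilbert) = cinner y x - cinner y z"
  by (metis cinner_add_right cinner_minus_right diff_conv_add_uminus)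

lemma cinner_self: "cinner x (x::'a::complex_hilbert) = of_real ((norm x)\<^sup>2)"
proof -
  have "Im (cinner x x) = 0"
    using cinner_commute[of x x]
    by (metis complex_cnj_cancel_iff complex_cnj_zero_iff complex_eq_iff complex_is_Real_iff
        Reals_cnj_iff)
  moreover have "Re (cinner x x) = (norm x)\<^sup>2"
    using norm_eq_sqrt_cinner[of x] cinner_ge_zero[of x] by simp
  ultimately show ?thesis by (simp add: complex_eq_iff)
qed

lemma norm_cinner_le: "norm (cinner x y) \<le> norm x * norm (y::'a::complex_hilbert)"
proof (cases "y = 0")
  case True
  then show ?thesis by simp
next
  case False
  define p where "p = cinner x y"
  define N where "N = (norm y)\<^sup>2"
  have "N > 0" using False by (simp add: N_def)
  define t where "t = p / of_real N"
  have p_sq: "p * cnj p = of_real ((norm p)\<^sup>2)"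
    by (metis complex_norm_square of_real_power)
  have "cinner (x - t *\<^sub>C y) (x - t *\<^sub>C y)
      = cinner x x - cnj t * p - t * cnj p + t * cnj t * of_real N"
    by (simp add: cinner_diff_left cinner_diff_right cinner_scaleC_left cinner_scaleC_right
        p_def N_def cinner_self[of y] cinner_commute[of y x] algebra_simps)
  also have "\<dots> = of_real ((norm x)\<^sup>2 - (norm p)\<^sup>2 / N)"
    using \<open>N > 0\<close> p_sq
    by (simp add: t_def cinner_self field_simps power2_eq_square)
  finally have "0 \<le> (norm x)\<^sup>2 - (norm p)\<^sup>2 / N"
    using cinner_ge_zero[of "x - t *\<^sub>C y"] by simp
  then have "(norm p)\<^sup>2 \<le> (norm x * norm y)\<^sup>2"
    using \<open>N > 0\<close> by (simp add: N_def field_simps power_mult_distrib)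
  then show ?thesis
    unfolding p_def by (meson norm_ge_zero power2_le_imp_le mult_nonneg_nonneg)
qed

lemma bounded_bilinear_cinner: "bounded_bilinear (cinner :: 'a::complex_hilbert \<Rightarrow> 'a \<Rightarrow> complex)"
proof
  show "\<exists>K. \<forall>a b::'a. norm (cinner a b) \<le> norm a * norm b * K"
    using norm_cinner_le by (metis mult.right_neutral)
qed (simp_all add: cinner_add_left cinner_add_right scaleR_scaleC cinner_scaleC_left
     cinner_scaleC_right scaleC_complex_def)

lemmas tendsto_cinner = bounded_bilinear.tendsto[OF bounded_bilinear_cinner]

lemma closed_cinner_left_eq_0: "closed {x::'a::complex_hilbert. cinner x z = 0}"
  by (intro closed_Collect_eq linear_continuous_on continuous_on_const
      bounded_bilinear.bounded_linear_left[OF bounded_bilinear_cinner])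

lemma closed_cinner_right_eq_0: "closed {y::'a::complex_hilbert. cinner v y = 0}"
  by (intro closed_Collect_eq linear_continuous_on continuous_on_const
      bounded_bilinear.bounded_linear_right[OF bounded_bilinear_cinner])

lemma orthogonal_dense_eq_0:
  assumes "closure D = UNIV" and "\<And>x. x \<in> D \<Longrightarrow> cinner x z = 0"
  shows "z = (0::'a::complex_hilbert)"
proof -
  have "closure D \<subseteq> {x. cinner x z = 0}"
    using assms(2) by (intro closure_minimal closed_cinner_left_eq_0) auto
  then have "cinner z z = 0" using assms(1) by auto
  then show ?thesis by (simp add: cinner_self)
qed

lemma coercive_norm_le:
  fixes v y :: "'a::complex_hilbert"
  assumes "m * (norm v)\<^sup>2 \<le> Re (cinner y v)"
  shows "m * norm v \<le> norm y"
proof (cases "v = 0")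
  case False
  have "norm v * (m * norm v) \<le> norm v * norm y"
    using assms complex_Re_le_cmod[of "cinner y v"] norm_cinner_le[of y v]
    by (simp add: power2_eq_square algebra_simps)
  then show ?thesis using False by simp
qed simp

lemma Cauchy_if_norm_diff_le:
  fixes a :: "nat \<Rightarrow> 'a::real_normed_vector" and p :: "nat \<Rightarrow> 'b::real_normed_vector"
  assumes "Cauchy p" and "0 < k" and "\<And>m n. k * norm (a m - a n) \<le> K * norm (p m - p n)"
  shows "Cauchy a"
proof (rule CauchyI)
  fix e :: real
  assume "0 < e"
  with \<open>0 < k\<close> have "k * e / (\<bar>K\<bar> + 1) > 0" by simp
  then obtain M where M: "\<forall>m\<ge>M. \<forall>n\<ge>M. norm (p m - p n) < k * e / (\<bar>K\<bar> + 1)"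
    using CauchyD[OF assms(1)] by blast
  have "norm (a m - a n) < e" if "m \<ge> M" "n \<ge> M" for m n
  proof -
    have "k * norm (a m - a n) \<le> \<bar>K\<bar> * norm (p m - p n)"
      using assms(3)[of m n] by (smt (verit) abs_ge_self mult_right_mono norm_ge_zero)
    also have "\<dots> \<le> \<bar>K\<bar> * (k * e / (\<bar>K\<bar> + 1))"
      using M that by (intro mult_left_mono) (auto intro: less_imp_le)
    also have "\<dots> < k * e"
      using \<open>0 < e\<close> \<open>0 < k\<close> by (simp add: field_simps)
    finally show ?thesis using \<open>0 < k\<close> by simp
  qed
  then show "\<exists>M. \<forall>m\<ge>M. \<forall>n\<ge>M. norm (a m - a n) < e" by blast
qed

lemma csubspaceD:
  assumes "csubspace S"
  shows "0 \<in> S" and "x \<in> S \<Longrightarrow> y \<in> S \<Longrightarrow> x + y \<in> S" and "x \<in> S \<Longrightarrow> c *\<^sub>C x \<in> S"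
  using assms unfolding csubspace_def by blast+

lemma csubspace_diff:
  assumes "csubspace S" "x \<in> S" "y \<in> S"
  shows "x - y \<in> S"
  using csubspaceD[OF assms(1)] assms(2,3) scaleC_minus_one[of y] by (metis diff_conv_add_uminus)

lemma csubspace_sum3:
  assumes A: "csubspace A" and B: "csubspace B" and C: "csubspace C"
  shows "csubspace {a + b + c | a b c. a \<in> A \<and> b \<in> B \<and> c \<in> C}"
  unfolding csubspace_def
proof (intro conjI ballI allI)
  have "(0::'a) = 0 + 0 + 0" by simp
  then show "0 \<in> {a + b + c | a b c. a \<in> A \<and> b \<in> B \<and> c \<in> C}"
    using csubspaceD(1)[OF A] csubspaceD(1)[OF B] csubspaceD(1)[OF C] by blast
next
  fix x y
  assume "x \<in> {a + b + c | a b c. a \<in> A \<and> b \<in> B \<and> c \<in> C}"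
    and "y \<in> {a + b + c | a b c. a \<in> A \<and> b \<in> B \<and> c \<in> C}"
  then obtain a b c a' b' c' where "x = a + b + c" "y = a' + b' + c'"
    and mem: "a \<in> A" "b \<in> B" "c \<in> C" "a' \<in> A" "b' \<in> B" "c' \<in> C" by blast
  then have "x + y = (a + a') + (b + b') + (c + c')" by (simp add: algebra_simps)
  moreover have "a + a' \<in> A" "b + b' \<in> B" "c + c' \<in> C"
    using mem csubspaceD(2)[OF A] csubspaceD(2)[OF B] csubspaceD(2)[OF C] by simp_all
  ultimately show "x + y \<in> {a + b + c | a b c. a \<in> A \<and> b \<in> B \<and> c \<in> C}" by blast
next
  fix s x
  assume "x \<in> {a + b + c | a b c. a \<in> A \<and> b \<in> B \<and> c \<in> C}"
  then obtain a b c where "x = a + b + c" and mem: "a \<in> A" "b \<in> B" "c \<in> C" by blast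
  then have "s *\<^sub>C x = s *\<^sub>C a + s *\<^sub>C b + s *\<^sub>C c" by (simp add: scaleC_add_right)
  moreover have "s *\<^sub>C a \<in> A" "s *\<^sub>C b \<in> B" "s *\<^sub>C c \<in> C"
    using mem csubspaceD(3)[OF A] csubspaceD(3)[OF B] csubspaceD(3)[OF C] by simp_all
  ultimately show "s *\<^sub>C x \<in> {a + b + c | a b c. a \<in> A \<and> b \<in> B \<and> c \<in> C}" by blast
qed

lemma dd_lin_opD:
  assumes "dd_lin_op D f"
  shows "csubspace D" and "closure D = UNIV"
    and "x \<in> D \<Longrightarrow> y \<in> D \<Longrightarrow> f (x - y) = f x - f y"
proof -
  show "csubspace D" "closure D = UNIV" using assms by (simp_all add: dd_lin_op_def)
  assume "x \<in> D" "y \<in> D"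
  then have "- y \<in> D" "f (- y) = - f y"
    using assms scaleC_minus_one unfolding dd_lin_op_def csubspace_def by metis+
  then show "f (x - y) = f x - f y"
    using assms \<open>x \<in> D\<close> unfolding dd_lin_op_def by (metis diff_conv_add_uminus)
qed

lemma dd_lin_op_add:
  assumes "dd_lin_op D f" "dd_lin_op D g"
  shows "dd_lin_op D (\<lambda>x. f x + g x)"
  using assms unfolding dd_lin_op_def by (simp add: scaleC_add_right algebra_simps)

lemma is_adjoint_cinner:
  "is_adjoint D f D' g \<Longrightarrow> y \<in> D' \<Longrightarrow> x \<in> D \<Longrightarrow> cinner (f x) y = cinner x (g y)"
  unfolding is_adjoint_def by blast

lemma is_adjoint_memI:
  assumes "is_adjoint D f D' g" "closure D = UNIV" "\<And>x. x \<in> D \<Longrightarrow> cinner (f x) y = cinner x z"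
  shows "y \<in> D'" and "g y = z"
proof -
  show y: "y \<in> D'" using assms(1,3) unfolding is_adjoint_def by blast
  have "g y - z = 0"
    using assms(3) is_adjoint_cinner[OF assms(1) y]
    by (intro orthogonal_dense_eq_0[OF assms(2)]) (simp add: cinner_diff_right)
  then show "g y = z" by simp
qed

lemma is_adjoint_add:
  assumes "is_adjoint D f D' g" "closure D = UNIV" "u \<in> D'" "v \<in> D'"
  shows "u + v \<in> D'" and "g (u + v) = g u + g v"
proof -
  have "\<And>x. x \<in> D \<Longrightarrow> cinner (f x) (u + v) = cinner x (g u + g v)"
    using is_adjoint_cinner[OF assms(1)] assms(3,4) by (simp add: cinner_add_left cinner_add_right)
  then show "u + v \<in> D'" "g (u + v) = g u + g v"
    using is_adjoint_memI[OF assms(1,2)] by blast+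
qed

lemma is_adjoint_diff:
  assumes "is_adjoint D f D' g" "closure D = UNIV" "u \<in> D'" "v \<in> D'"
  shows "u - v \<in> D'" and "g (u - v) = g u - g v"
proof -
  have "\<And>x. x \<in> D \<Longrightarrow> cinner (f x) (u - v) = cinner x (g u - g v)"
    using is_adjoint_cinner[OF assms(1)] assms(3,4) by (simp add: cinner_diff_left cinner_diff_right)
  then show "u - v \<in> D'" "g (u - v) = g u - g v"
    using is_adjoint_memI[OF assms(1,2)] by blast+
qed

lemma op_ker_adjoint:
  assumes "is_adjoint D f D' g" "closure D = UNIV"
  shows "op_ker D' g = (\<Inter>x\<in>D. {y. cinner (f x) y = 0})"
proof (intro equalityI subsetI)
  fix y
  assume "y \<in> op_ker D' g"
  then show "y \<in> (\<Inter>x\<in>D. {y. cinner (f x) y = 0})"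
    using is_adjoint_cinner[OF assms(1)] by (simp add: op_ker_def)
next
  fix y
  assume "y \<in> (\<Inter>x\<in>D. {y. cinner (f x) y = 0})"
  then have "\<And>x. x \<in> D \<Longrightarrow> cinner (f x) y = cinner x 0" by simp
  from is_adjoint_memI[OF assms this] show "y \<in> op_ker D' g" by (simp add: op_ker_def)
qed

lemma closed_op_ker_adjoint:
  "is_adjoint D f D' g \<Longrightarrow> closure D = UNIV \<Longrightarrow> closed (op_ker D' g)"
  unfolding op_ker_adjoint by (intro closed_INT ballI closed_cinner_right_eq_0)

lemma csubspace_op_ker_adjoint:
  "is_adjoint D f D' g \<Longrightarrow> closure D = UNIV \<Longrightarrow> csubspace (op_ker D' g)"
  unfolding op_ker_adjoint csubspace_def by (simp add: cinner_add_right cinner_scaleC_right)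

lemma closed_graph_norm_iff:
  "closed_graph_norm W T S \<longleftrightarrow>
     (\<forall>u x. (\<forall>n. u n \<in> S) \<longrightarrow> x \<in> W \<longrightarrow> (\<lambda>n. (u n, T (u n))) \<longlonglongrightarrow> (x, T x) \<longrightarrow> x \<in> S)"
proof -
  have "(\<lambda>n. sqrt ((norm (u n - x))\<^sup>2 + (norm (T (u n) - T x))\<^sup>2)) \<longlonglongrightarrow> 0
      \<longleftrightarrow> (\<lambda>n. (u n, T (u n))) \<longlonglongrightarrow> (x, T x)" for u :: "nat \<Rightarrow> 'a" and x
  proof -
    have "(\<lambda>n. sqrt ((norm (u n - x))\<^sup>2 + (norm (T (u n) - T x))\<^sup>2))
        = (\<lambda>n. norm ((u n, T (u n)) - (x, T x)))"
      by (simp add: norm_Pair)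
    then show ?thesis by (simp only: tendsto_norm_zero_iff LIM_zero_iff)
  qed
  then show ?thesis unfolding closed_graph_norm_def by (simp only:)
qed

lemma bounded_symmetric_representer:
  assumes S: "dd_lin_op D S"
    and symmetric: "\<And>x y. x \<in> D \<Longrightarrow> y \<in> D \<Longrightarrow> cinner (S x) y = cinner x (S y)"
    and bounded: "\<And>x. x \<in> D \<Longrightarrow> norm (S x) \<le> c * norm x"
  obtains z where "\<And>x. x \<in> D \<Longrightarrow> cinner (S x) y = cinner x z" and "norm z \<le> c * norm y"
proof -
  have "y \<in> closure D" using dd_lin_opD(2)[OF S] by simp
  then obtain f where f: "\<And>n. f n \<in> D" "f \<longlonglongrightarrow> y" by (meson closure_sequential)
  have "Cauchy (\<lambda>n. S (f n))"
  proof (rule Cauchy_if_norm_diff_le[OF LIMSEQ_imp_Cauchy[OF f(2)] zero_less_one])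
    fix m n
    show "1 * norm (S (f m) - S (f n)) \<le> c * norm (f m - f n)"
      using bounded[OF csubspace_diff[OF dd_lin_opD(1)[OF S] f(1) f(1)]]
      by (simp add: dd_lin_opD(3)[OF S f(1) f(1)])
  qed
  then obtain z where z: "(\<lambda>n. S (f n)) \<longlonglongrightarrow> z" by (auto simp: Cauchy_convergent_iff convergent_def)
  show thesis
  proof
    fix x
    assume "x \<in> D"
    have "(\<lambda>n. cinner (S x) (f n)) \<longlonglongrightarrow> cinner (S x) y"
      by (rule tendsto_cinner[OF tendsto_const f(2)])
    moreover have "(\<lambda>n. cinner (S x) (f n)) \<longlonglongrightarrow> cinner x z"
      unfolding symmetric[OF \<open>x \<in> D\<close> f(1)] by (rule tendsto_cinner[OF tendsto_const z])
    ultimately show "cinner (S x) y = cinner x z" by (rule LIMSEQ_unique)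
  next
    show "norm z \<le> c * norm y"
      using f bounded by (intro LIMSEQ_le[OF tendsto_norm[OF z] tendsto_mult_left[OF tendsto_norm]]) auto
  qed
qed

lemma closed_opD:
  assumes "closed_op D f" "\<And>n. x n \<in> D" "x \<longlonglongrightarrow> y" "(\<lambda>n. f (x n)) \<longlonglongrightarrow> z"
  shows "y \<in> D" and "f y = z"
proof -
  have "closed {(x, f x) | x. x \<in> D}" using assms(1) by (simp add: closed_op_def)
  moreover have "(x n, f (x n)) \<in> {(x, f x) | x. x \<in> D}" for n using assms(2) by blast
  moreover have "(\<lambda>n. (x n, f (x n))) \<longlonglongrightarrow> (y, z)" using assms(3,4) by (rule tendsto_Pair)
  ultimately have "(y, z) \<in> {(x, f x) | x. x \<in> D}" by (rule closed_sequentially)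
  then show "y \<in> D" "f y = z" by auto
qed

locale friedrichs_pair =
  fixes W0 W Wt :: "'a::complex_hilbert set" and T0 Tt0 T1 Tt1 :: "'a \<Rightarrow> 'a" and c \<mu> :: real
  assumes dd_lin_op_T0: "dd_lin_op W0 T0" and dd_lin_op_Tt0: "dd_lin_op W0 Tt0"
    and formal_adjoint: "\<And>\<phi> \<psi>. \<phi> \<in> W0 \<Longrightarrow> \<psi> \<in> W0 \<Longrightarrow> cinner (T0 \<phi>) \<psi> = cinner \<phi> (Tt0 \<psi>)"
    and c_nonneg: "0 \<le> c"
    and sum_bounded: "\<And>\<phi>. \<phi> \<in> W0 \<Longrightarrow> norm (T0 \<phi> + Tt0 \<phi>) \<le> c * norm \<phi>"
    and \<mu>_pos: "0 < \<mu>"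
    and sum_coercive: "\<And>\<phi>. \<phi> \<in> W0 \<Longrightarrow> 2 * \<mu> * (norm \<phi>)\<^sup>2 \<le> Re (cinner (T0 \<phi> + Tt0 \<phi>) \<phi>)"
    and adjoint_T1: "is_adjoint W0 Tt0 W T1" and adjoint_Tt1: "is_adjoint W0 T0 Wt Tt1"
begin

lemma dense_W0: "closure W0 = UNIV"
  using dd_lin_opD(2)[OF dd_lin_op_T0] .

lemma formal_adjoint_swapped: "\<phi> \<in> W0 \<Longrightarrow> \<psi> \<in> W0 \<Longrightarrow> cinner (Tt0 \<phi>) \<psi> = cinner \<phi> (T0 \<psi>)"
  by (metis formal_adjoint cinner_commute)

text \<open>The hypotheses are symmetric under exchanging \<open>T0\<close> with \<open>Tt0\<close> (and hence \<open>T1\<close> with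
  \<open>Tt1\<close>), so every result below is also available with the roles swapped.\<close>

lemma friedrichs_pair_swapped: "friedrichs_pair W0 Wt W Tt0 T0 Tt1 T1 c \<mu>"
  by unfold_locales
    (use dd_lin_op_T0 dd_lin_op_Tt0 formal_adjoint_swapped c_nonneg sum_bounded \<mu>_pos sum_coercive
      adjoint_T1 adjoint_Tt1 in \<open>simp_all add: add.commute\<close>)

lemma T1_extends_T0:
  assumes "x \<in> W0"
  shows "x \<in> W" and "T1 x = T0 x"
  using is_adjoint_memI[OF adjoint_T1 dense_W0] formal_adjoint_swapped[OF _ assms] by blast+

lemmas T1_add = is_adjoint_add[OF adjoint_T1 dense_W0]
  and T1_diff = is_adjoint_diff[OF adjoint_T1 dense_W0]

lemma T0_plus_Tt0_representer:
  obtains z where "\<And>x. x \<in> W0 \<Longrightarrow> cinner (T0 x + Tt0 x) y = cinner x z" and "norm z \<le> c * norm y"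
proof (rule bounded_symmetric_representer[OF dd_lin_op_add[OF dd_lin_op_T0 dd_lin_op_Tt0]])
  show "cinner (T0 x + Tt0 x) y = cinner x (T0 y + Tt0 y)" if "x \<in> W0" "y \<in> W0" for x y
    using that formal_adjoint formal_adjoint_swapped by (simp add: cinner_add_left cinner_add_right)
qed (use sum_bounded in blast)+

lemma T1_plus_Tt1_representer:
  assumes "u \<in> W" and "\<And>x. x \<in> W0 \<Longrightarrow> cinner (T0 x + Tt0 x) u = cinner x z"
  shows "u \<in> Wt" and "T1 u + Tt1 u = z"
proof -
  have "\<And>x. x \<in> W0 \<Longrightarrow> cinner (T0 x) u = cinner x (z - T1 u)"
    using assms is_adjoint_cinner[OF adjoint_T1 assms(1)]
    by (simp add: cinner_add_left cinner_diff_right algebra_simps)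
  then show "u \<in> Wt" and "T1 u + Tt1 u = z"
    using is_adjoint_memI[OF adjoint_Tt1 dense_W0] by auto
qed

lemma W_subset_Wt: "W \<subseteq> Wt"
  by (metis T0_plus_Tt0_representer T1_plus_Tt1_representer(1) subsetI)

lemma Wt_eq_W: "Wt = W"
  using W_subset_Wt friedrichs_pair.W_subset_Wt[OF friedrichs_pair_swapped] by blast

lemma norm_T1_plus_Tt1_le: "u \<in> W \<Longrightarrow> norm (T1 u + Tt1 u) \<le> c * norm u"
  by (metis T0_plus_Tt0_representer T1_plus_Tt1_representer(2))

lemma T1_plus_Tt1_diff:
  "u \<in> W \<Longrightarrow> v \<in> W \<Longrightarrow> T1 (u - v) + Tt1 (u - v) = (T1 u + Tt1 u) - (T1 v + Tt1 v)"
  using T1_diff friedrichs_pair.T1_diff[OF friedrichs_pair_swapped] by (simp add: Wt_eq_W)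

lemma tendsto_T1_plus_Tt1:
  assumes "\<And>n. f n \<in> W" "u \<in> W" "f \<longlonglongrightarrow> u"
  shows "(\<lambda>n. T1 (f n) + Tt1 (f n)) \<longlonglongrightarrow> T1 u + Tt1 u"
proof (rule LIM_zero_cancel, rule Lim_null_comparison)
  show "\<forall>\<^sub>F n in sequentially. norm (T1 (f n) + Tt1 (f n) - (T1 u + Tt1 u)) \<le> c * norm (f n - u)"
    using assms(1,2) norm_T1_plus_Tt1_le[OF T1_diff(1)] by (simp add: T1_plus_Tt1_diff[symmetric])
  show "(\<lambda>n. c * norm (f n - u)) \<longlonglongrightarrow> 0"
    using assms(3) by (intro tendsto_mult_right_zero) (simp add: LIM_zero tendsto_norm_zero)
qed

lemma T1_plus_Tt1_coercive:
  assumes "u \<in> W"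
  shows "2 * \<mu> * (norm u)\<^sup>2 \<le> Re (cinner (T1 u + Tt1 u) u)"
proof -
  have "u \<in> closure W0" using dense_W0 by simp
  then obtain f where f: "\<And>n. f n \<in> W0" "f \<longlonglongrightarrow> u" by (meson closure_sequential)
  have "(\<lambda>n. Re (cinner (T1 (f n) + Tt1 (f n)) (f n))) \<longlonglongrightarrow> Re (cinner (T1 u + Tt1 u) u)"
    using f T1_extends_T0(1) by (intro tendsto_Re tendsto_cinner tendsto_T1_plus_Tt1 assms) auto
  moreover have "(\<lambda>n. 2 * \<mu> * (norm (f n))\<^sup>2) \<longlonglongrightarrow> 2 * \<mu> * (norm u)\<^sup>2"
    by (intro tendsto_intros f(2))
  moreover have "2 * \<mu> * (norm (f n))\<^sup>2 \<le> Re (cinner (T1 (f n) + Tt1 (f n)) (f n))" for n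
    using sum_coercive f(1) T1_extends_T0(2) friedrichs_pair.T1_extends_T0(2)[OF friedrichs_pair_swapped]
    by simp
  ultimately show ?thesis by (intro LIMSEQ_le) auto
qed

lemma ker_T1_closed: "closed (op_ker W T1)"
  and ker_T1_csubspace: "csubspace (op_ker W T1)"
  using closed_op_ker_adjoint csubspace_op_ker_adjoint adjoint_T1 dense_W0 by blast+

lemma ker_Tt1_closed: "closed (op_ker Wt Tt1)"
  and ker_Tt1_csubspace: "csubspace (op_ker Wt Tt1)"
  using friedrichs_pair.ker_T1_closed friedrichs_pair.ker_T1_csubspace friedrichs_pair_swapped
  by blast+

lemma T1_on_W0_plus_ker_T1:
  assumes "w \<in> W0" "a \<in> op_ker W T1" "b \<in> W"
  shows "w + a + b \<in> W" and "T1 (w + a + b) = T0 w + T1 b"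
  using assms T1_extends_T0 T1_add by (auto simp: op_ker_def)

lemma W0_plus_kernels_subset_W: "{w + a + b | w a b. w \<in> W0 \<and> a \<in> op_ker W T1 \<and> b \<in> op_ker Wt Tt1} \<subseteq> W"
  using T1_on_W0_plus_ker_T1(1) by (auto simp: op_ker_def Wt_eq_W)

lemma ker_Tt1_part_le_norm_T1:
  assumes "w \<in> W0" "a \<in> op_ker W T1" "b \<in> op_ker Wt Tt1"
  shows "2 * \<mu> * norm b \<le> norm (T1 (w + a + b))"
proof (rule coercive_norm_le)
  have b: "b \<in> W" "Tt1 b = 0" using assms(3) by (simp_all add: op_ker_def Wt_eq_W)
  have "cinner (T0 w) b = 0"
    using is_adjoint_cinner[OF adjoint_Tt1 _ assms(1)] assms(3) by (simp add: op_ker_def)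
  then have "cinner (T1 (w + a + b)) b = cinner (T1 b + Tt1 b) b"
    using T1_on_W0_plus_ker_T1(2)[OF assms(1,2) b(1)] b(2) by (simp add: cinner_add_left)
  then show "2 * \<mu> * (norm b)\<^sup>2 \<le> Re (cinner (T1 (w + a + b)) b)"
    using T1_plus_Tt1_coercive[OF b(1)] by simp
qed

lemma ker_parts_le_graph_norm:
  assumes "w \<in> W0" "a \<in> op_ker W T1" "b \<in> op_ker Wt Tt1"
  defines "u \<equiv> w + a + b"
  shows "2 * \<mu> * norm a \<le> (c + 1) * norm (u, T1 u)"
    and "2 * \<mu> * norm b \<le> (c + 1) * norm (u, T1 u)"
proof -
  have u: "u \<in> W"
    using assms T1_on_W0_plus_ker_T1(1) by (simp add: op_ker_def Wt_eq_W)
  have "2 * \<mu> * norm a \<le> norm (Tt1 u)"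
    using friedrichs_pair.ker_Tt1_part_le_norm_T1[OF friedrichs_pair_swapped assms(1,3,2)]
    by (simp add: u_def add.commute add.left_commute)
  also have "\<dots> \<le> norm (T1 u + Tt1 u) + norm (T1 u)"
    using norm_triangle_ineq4[of "T1 u + Tt1 u" "T1 u"] by simp
  also have "\<dots> \<le> c * norm u + norm (T1 u)"
    using norm_T1_plus_Tt1_le[OF u] by simp
  also have "\<dots> \<le> (c + 1) * norm (u, T1 u)"
    using norm_fst_le[of u "T1 u"] norm_snd_le[of "T1 u" u] c_nonneg
    by (simp add: distrib_right mult_left_mono add_mono)
  finally show "2 * \<mu> * norm a \<le> (c + 1) * norm (u, T1 u)" .
  have "2 * \<mu> * norm b \<le> norm (T1 u)"
    using ker_Tt1_part_le_norm_T1[OF assms(1-3)] by (simp add: u_def)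
  also have "\<dots> \<le> (c + 1) * norm (u, T1 u)"
    using norm_snd_le[of "T1 u" u] mult_nonneg_nonneg[OF c_nonneg norm_ge_zero[of "(u, T1 u)"]]
    by (simp add: distrib_right)
  finally show "2 * \<mu> * norm b \<le> (c + 1) * norm (u, T1 u)" .
qed

lemma W0_plus_kernels_direct:
  assumes "w \<in> W0" "a \<in> op_ker W T1" "b \<in> op_ker Wt Tt1" "w + a + b = 0"
  shows "w = 0" and "a = 0" and "b = 0"
proof -
  have "T1 0 = 0" using T1_diff(2)[of 0 0] T1_extends_T0(1) dd_lin_opD(1)[OF dd_lin_op_T0]
    by (simp add: csubspace_def)
  then have "2 * \<mu> * norm a \<le> 0" "2 * \<mu> * norm b \<le> 0"
    using ker_parts_le_graph_norm[OF assms(1-3)] assms(4) by simp_all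
  then show "a = 0" "b = 0" using \<mu>_pos by (simp_all add: mult_le_0_iff)
  then show "w = 0" using assms(4) by simp
qed

lemma ker_parts_Cauchy:
  assumes w: "\<And>n. w n \<in> W0" and a: "\<And>n. a n \<in> op_ker W T1" and b: "\<And>n. b n \<in> op_ker Wt Tt1"
    and graph: "Cauchy (\<lambda>n. (w n + a n + b n, T1 (w n + a n + b n)))"
  shows "Cauchy a" and "Cauchy b"
proof -
  define p where "p n = (w n + a n + b n, T1 (w n + a n + b n))" for n
  have bound: "2 * \<mu> * norm (a m - a n) \<le> (c + 1) * norm (p m - p n)
    \<and> 2 * \<mu> * norm (b m - b n) \<le> (c + 1) * norm (p m - p n)" for m n
  proof -
    define u where "u = (w m - w n) + (a m - a n) + (b m - b n)"
    have "w k + a k + b k \<in> W" for k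
      using T1_on_W0_plus_ker_T1(1)[OF w a] b by (simp add: op_ker_def Wt_eq_W)
    moreover have "u = (w m + a m + b m) - (w n + a n + b n)"
      by (simp add: u_def algebra_simps)
    ultimately have p_diff: "p m - p n = (u, T1 u)"
      by (simp add: p_def T1_diff(2))
    have "w m - w n \<in> W0" "a m - a n \<in> op_ker W T1" "b m - b n \<in> op_ker Wt Tt1"
      using csubspace_diff[OF dd_lin_opD(1)[OF dd_lin_op_T0] w w]
        csubspace_diff[OF ker_T1_csubspace a a]
        csubspace_diff[OF ker_Tt1_csubspace b b]
      by simp_all
    from ker_parts_le_graph_norm[OF this] show ?thesis
      unfolding p_diff u_def by blast
  qed
  have p: "Cauchy p" using graph unfolding p_def .
  have k: "0 < 2 * \<mu>" using \<mu>_pos by simp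
  show "Cauchy a" by (rule Cauchy_if_norm_diff_le[OF p k]) (use bound in blast)
  show "Cauchy b" by (rule Cauchy_if_norm_diff_le[OF p k]) (use bound in blast)
qed

lemma graph_limit_decomposition:
  assumes "closed_op W0 T0"
    and w: "\<And>n. w n \<in> W0" and a: "\<And>n. a n \<in> op_ker W T1" and b: "\<And>n. b n \<in> op_ker Wt Tt1"
    and graph: "(\<lambda>n. (w n + a n + b n, T1 (w n + a n + b n))) \<longlonglongrightarrow> (x, T1 x)"
  obtains a' b' where "a \<longlonglongrightarrow> a'" and "b \<longlonglongrightarrow> b'" and "x - a' - b' \<in> W0"
proof -
  define u where "u n = w n + a n + b n" for n
  have "Cauchy a" "Cauchy b"
    using ker_parts_Cauchy[OF w a b LIMSEQ_imp_Cauchy[OF graph]] by simp_all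
  then obtain a' b' where a': "a \<longlonglongrightarrow> a'" and b': "b \<longlonglongrightarrow> b'"
    by (auto simp: Cauchy_convergent_iff convergent_def)
  have b_W: "b n \<in> W" "Tt1 (b n) = 0" for n
    using b[of n] by (simp_all add: op_ker_def Wt_eq_W)
  have b'_W: "b' \<in> W"
    using closed_sequentially[OF ker_Tt1_closed b b'] by (simp add: op_ker_def Wt_eq_W)
  have u_lim: "u \<longlonglongrightarrow> x" and T1u_lim: "(\<lambda>n. T1 (u n)) \<longlonglongrightarrow> T1 x"
    using tendsto_fst[OF graph] tendsto_snd[OF graph] by (simp_all add: u_def[abs_def])
  have "w = (\<lambda>n. u n - a n - b n)" by (simp add: u_def)
  then have "w \<longlonglongrightarrow> x - a' - b'"
    using tendsto_diff[OF tendsto_diff[OF u_lim a'] b'] by simp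
  moreover have "(\<lambda>n. T0 (w n)) \<longlonglongrightarrow> T1 x - (T1 b' + Tt1 b')"
  proof -
    have "T1 (u n) = T0 (w n) + T1 (b n)" for n
      using T1_on_W0_plus_ker_T1(2)[OF w a b_W(1)] by (simp add: u_def)
    then have "(\<lambda>n. T0 (w n)) = (\<lambda>n. T1 (u n) - (T1 (b n) + Tt1 (b n)))"
      by (simp add: b_W(2))
    then show ?thesis
      using tendsto_diff[OF T1u_lim tendsto_T1_plus_Tt1[OF b_W(1) b'_W b']] by simp
  qed
  ultimately have "x - a' - b' \<in> W0" by (rule closed_opD(1)[OF assms(1) w])
  with a' b' that show thesis by blast
qed

lemma closed_graph_norm_W0_plus:
  assumes "closed_op W0 T0"
    and A: "closed A" "A \<subseteq> op_ker W T1" and B: "closed B" "B \<subseteq> op_ker Wt Tt1"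
  shows "closed_graph_norm W T1 {w + a + b | w a b. w \<in> W0 \<and> a \<in> A \<and> b \<in> B}"
  unfolding closed_graph_norm_iff
proof (intro allI impI)
  fix u x
  assume mem: "\<forall>n. u n \<in> {w + a + b | w a b. w \<in> W0 \<and> a \<in> A \<and> b \<in> B}" and "x \<in> W"
    and graph: "(\<lambda>n. (u n, T1 (u n))) \<longlonglongrightarrow> (x, T1 x)"
  from mem have "\<forall>n. \<exists>w a b. w \<in> W0 \<and> a \<in> A \<and> b \<in> B \<and> u n = w + a + b" by blast
  then obtain w a b where "\<And>n. w n \<in> W0 \<and> a n \<in> A \<and> b n \<in> B \<and> u n = w n + a n + b n"
    by metis
  then have w: "\<And>n. w n \<in> W0" and a: "\<And>n. a n \<in> A" and b: "\<And>n. b n \<in> B"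
    and u: "u = (\<lambda>n. w n + a n + b n)"
    by (simp_all add: fun_eq_iff)
  have ker: "a n \<in> op_ker W T1" "b n \<in> op_ker Wt Tt1" for n
    using a b A(2) B(2) by blast+
  have "(\<lambda>n. (w n + a n + b n, T1 (w n + a n + b n))) \<longlonglongrightarrow> (x, T1 x)"
    using graph by (simp add: u)
  then obtain a' b' where a': "a \<longlonglongrightarrow> a'" and b': "b \<longlonglongrightarrow> b'" and "x - a' - b' \<in> W0"
    by (rule graph_limit_decomposition[OF assms(1) w ker])
  moreover have "a' \<in> A" "b' \<in> B"
    using closed_sequentially[OF A(1) a a'] closed_sequentially[OF B(1) b b'] by simp_all
  moreover have "x = (x - a' - b') + a' + b'" by simp
  ultimately show "x \<in> {w + a + b | w a b. w \<in> W0 \<and> a \<in> A \<and> b \<in> B}" by blast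
qed

lemma closed_graph_norm_W0_plus_kernels:
  assumes "closed_op W0 T0"
  shows "closed_graph_norm W T1 {w + a + b | w a b. w \<in> W0 \<and> a \<in> op_ker W T1 \<and> b \<in> op_ker Wt Tt1}"
    and "closed_graph_norm W T1 {w + a | w a. w \<in> W0 \<and> a \<in> op_ker W T1}"
    and "closed_graph_norm W T1 {w + b | w b. w \<in> W0 \<and> b \<in> op_ker Wt Tt1}"
proof -
  note closed_sum = closed_graph_norm_W0_plus[OF assms]
  have "{0} \<subseteq> op_ker W T1" "{0} \<subseteq> op_ker Wt Tt1"
    using csubspaceD(1)[OF ker_T1_csubspace] csubspaceD(1)[OF ker_Tt1_csubspace] by simp_all
  show "closed_graph_norm W T1
      {w + a + b | w a b. w \<in> W0 \<and> a \<in> op_ker W T1 \<and> b \<in> op_ker Wt Tt1}"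
    using closed_sum[OF ker_T1_closed subset_refl ker_Tt1_closed subset_refl] .
  have "{w + a + b | w a b. w \<in> W0 \<and> a \<in> op_ker W T1 \<and> b \<in> {0}}
      = {w + a | w a. w \<in> W0 \<and> a \<in> op_ker W T1}"
    by simp
  with closed_sum[OF ker_T1_closed subset_refl closed_singleton \<open>{0} \<subseteq> op_ker Wt Tt1\<close>]
  show "closed_graph_norm W T1 {w + a | w a. w \<in> W0 \<and> a \<in> op_ker W T1}" by (simp only:)
  have "{w + a + b | w a b. w \<in> W0 \<and> a \<in> {0} \<and> b \<in> op_ker Wt Tt1}
      = {w + b | w b. w \<in> W0 \<and> b \<in> op_ker Wt Tt1}"
    by simp
  with closed_sum[OF closed_singleton \<open>{0} \<subseteq> op_ker W T1\<close> ker_Tt1_closed subset_refl]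
  show "closed_graph_norm W T1 {w + b | w b. w \<in> W0 \<and> b \<in> op_ker Wt Tt1}" by (simp only:)
qed

end

theorem lemma3p5:
  fixes W0 W Wt :: "'a::complex_hilbert set" and T0 Tt0 T1 Tt1 :: "'a \<Rightarrow> 'a"
  assumes "closed_joint_AFO W0 T0 Tt0"
    and "is_adjoint W0 Tt0 W T1"
    and "is_adjoint W0 T0 Wt Tt1"
  shows "(\<forall>w a b. w \<in> W0 \<and> a \<in> op_ker W T1 \<and> b \<in> op_ker Wt Tt1 \<and> w + a + b = 0
            \<longrightarrow> w = 0 \<and> a = 0 \<and> b = 0)
     \<and> {w + a + b | w a b. w \<in> W0 \<and> a \<in> op_ker W T1 \<and> b \<in> op_ker Wt Tt1} \<subseteq> W
     \<and> csubspace {w + a + b | w a b. w \<in> W0 \<and> a \<in> op_ker W T1 \<and> b \<in> op_ker Wt Tt1}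
     \<and> closed_graph_norm W T1 {w + a + b | w a b. w \<in> W0 \<and> a \<in> op_ker W T1 \<and> b \<in> op_ker Wt Tt1}
     \<and> closed_graph_norm W T1 {w + a | w a. w \<in> W0 \<and> a \<in> op_ker W T1}
     \<and> closed_graph_norm W T1 {w + b | w b. w \<in> W0 \<and> b \<in> op_ker Wt Tt1}"
proof -
  obtain c \<mu> where "friedrichs_pair W0 W Wt T0 Tt0 T1 Tt1 c \<mu>"
    using assms unfolding closed_joint_AFO_def joint_AFO_def friedrichs_pair_def
    by (metis less_eq_real_def)
  then interpret friedrichs_pair W0 W Wt T0 Tt0 T1 Tt1 c \<mu> .
  have "closed_op W0 T0" using assms(1) by (simp add: closed_joint_AFO_def)
  then show ?thesis
    using W0_plus_kernels_direct W0_plus_kernels_subset_W closed_graph_norm_W0_plus_kernels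
      csubspace_sum3[OF dd_lin_opD(1)[OF dd_lin_op_T0] ker_T1_csubspace ker_Tt1_csubspace]
    by blast
qed

end
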